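(* For $n\ge1$, let $\sigma=(\sigma_1,\dots,\sigma_n)$ be a random element of $\{-1,1\}^n$ with distribution $$P(\sigma)=Z^{-1}\exp\Big(\frac1n\sum_{1\le i<j\le n}\sigma_i\sigma_j\Big),$$ $Z$ the normalizing constant (the Curie-Weiss model at temperature $T=1$). Construct $\sigma'$ as follows: choose an index $I$ uniformly at random from $\{1,\dots,n\}$, independently of $\sigma$, let $\sigma'_j=\sigma_j$ for $j\ne I$, and draw $\sigma'_I$ from the conditional distribution of $\sigma_I$ given $(\sigma_j)_{j\ne I}$ (one step of Glauber dynamics). Let $W=n^{-3/4}\sum_{i=1}^n\sigma_i$ and $W'=n^{-3/4}\sum_{i=1}^n\sigma'_i$. Then $$E\Big|E(W-W'\mid W)-\frac{n^{-3/2}}{3}W^3\Big|\le 15n^{-2},\qquad E\big|E((W-W')^2\mid W)-2n^{-3/2}\big|\le 15n^{-2},$$ $$E|W|^3\le 15,$$ and $|W-W'|\le 2n^{-3/4}$. *)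

theory Defs
  imports "HOL-Library.FuncSet" Complex_Main
begin

definition spins :: "nat \<Rightarrow> (nat \<Rightarrow> real) set" where
  "spins n = PiE {..<n} (\<lambda>_. {-1, 1})"

definition cw_energy :: "nat \<Rightarrow> (nat \<Rightarrow> real) \<Rightarrow> real" where
  "cw_energy n \<sigma> = (1 / real n) * (\<Sum>i<n. \<Sum>j\<in>{i<..<n}. \<sigma> i * \<sigma> j)"

definition cw_Z :: "nat \<Rightarrow> real" where
  "cw_Z n = (\<Sum>\<sigma>\<in>spins n. exp (cw_energy n \<sigma>))"

definition cw_prob :: "nat \<Rightarrow> (nat \<Rightarrow> real) \<Rightarrow> real" where
  "cw_prob n \<sigma> = exp (cw_energy n \<sigma>) / cw_Z n"

definition cw_cond :: "nat \<Rightarrow> (nat \<Rightarrow> real) \<Rightarrow> nat \<Rightarrow> real \<Rightarrow> real" where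
  "cw_cond n \<sigma> i s = cw_prob n (\<sigma>(i := s)) /
      (cw_prob n (\<sigma>(i := 1)) + cw_prob n (\<sigma>(i := -1)))"

text \<open>Sample space: (sigma, I, new value of spin I); sigma' = sigma(I := s).\<close>
definition omega :: "nat \<Rightarrow> ((nat \<Rightarrow> real) \<times> nat \<times> real) set" where
  "omega n = spins n \<times> {..<n} \<times> {-1, 1}"

definition pr :: "nat \<Rightarrow> (nat \<Rightarrow> real) \<times> nat \<times> real \<Rightarrow> real" where
  "pr n \<omega> = (case \<omega> of (\<sigma>, i, s) \<Rightarrow> cw_prob n \<sigma> * (1 / real n) * cw_cond n \<sigma> i s)"

definition sigma' :: "(nat \<Rightarrow> real) \<times> nat \<times> real \<Rightarrow> nat \<Rightarrow> real" where
  "sigma' \<omega> = (case \<omega> of (\<sigma>, i, s) \<Rightarrow> \<sigma>(i := s))"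

definition Wfun :: "nat \<Rightarrow> (nat \<Rightarrow> real) \<Rightarrow> real" where
  "Wfun n \<sigma> = (\<Sum>i<n. \<sigma> i) / real n powr (3/4)"

definition W :: "nat \<Rightarrow> (nat \<Rightarrow> real) \<times> nat \<times> real \<Rightarrow> real" where
  "W n \<omega> = Wfun n (fst \<omega>)"

definition W' :: "nat \<Rightarrow> (nat \<Rightarrow> real) \<times> nat \<times> real \<Rightarrow> real" where
  "W' n \<omega> = Wfun n (sigma' \<omega>)"

definition Ex :: "nat \<Rightarrow> ((nat \<Rightarrow> real) \<times> nat \<times> real \<Rightarrow> real) \<Rightarrow> real" where
  "Ex n f = (\<Sum>\<omega>\<in>omega n. pr n \<omega> * f \<omega>)"

definition condE_W :: "nat \<Rightarrow> ((nat \<Rightarrow> real) \<times> nat \<times> real \<Rightarrow> real)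
    \<Rightarrow> (nat \<Rightarrow> real) \<times> nat \<times> real \<Rightarrow> real" where
  "condE_W n f \<omega> =
     (\<Sum>\<eta>\<in>{\<eta>\<in>omega n. W n \<eta> = W n \<omega>}. pr n \<eta> * f \<eta>) /
     (\<Sum>\<eta>\<in>{\<eta>\<in>omega n. W n \<eta> = W n \<omega>}. pr n \<eta>)"

end

theory Submission
  imports Defs
begin

text \<open>Write \<open>m = S/n\<close> for the magnetisation, so that \<open>W = n powr (1/4) * m\<close>. Given \<open>\<sigma>\<close>, the
  Glauber step flips a \<open>+1\<close> spin with probability \<open>(1 + m)/2 * (1 - tanh (m - 1/n))/2\<close> and a
  \<open>-1\<close> spin with probability \<open>(1 - m)/2 * (1 + tanh (m + 1/n))/2\<close>, so \<open>E(W - W' | \<sigma>)\<close> and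
  \<open>E((W - W')^2 | \<sigma>)\<close> are explicit functions of \<open>m\<close>; conditioning further on \<open>W\<close> only decreases
  \<open>L1\<close> distances. The expansion \<open>tanh x = x - x^3/3 + O(x^5)\<close> makes the drift
  \<open>m^3/3 + O(|m|^5 + |m|/n)\<close> and the flip probability \<open>1/2 + O(m^2 + 1/n)\<close>. The moments of \<open>W\<close>
  come from stationarity of the Gibbs measure under the Glauber step: applied to \<open>S^2\<close> and \<open>S^4\<close> it
  gives \<open>E(m * drift) = O(1/n)\<close> and \<open>E(m^3 * drift) = O(E(m^2)/n)\<close>, and the lower bound
  \<open>m * drift \<ge> m^4/5 - 2/n^2\<close> turns these into \<open>E(W^4) \<le> 8\<close> and \<open>E(W^6) \<le> 340/3\<close>.\<close>

section \<open>Elementary inequalities for tanh\<close>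

lemma MVT_symmetric:
  fixes f f' :: "real \<Rightarrow> real"
  assumes "\<And>z. (f has_real_derivative f' z) (at z)"
  obtains \<xi> where "\<bar>\<xi> - a\<bar> \<le> \<bar>b - a\<bar>" "f b - f a = (b - a) * f' \<xi>"
proof (cases a b rule: linorder_cases)
  case less
  with MVT2[OF less] assms that show ?thesis by force
next
  case equal
  with that show ?thesis by auto
next
  case greater
  from MVT2[OF greater] assms obtain \<xi> where "b < \<xi>" "\<xi> < a" "f a - f b = (a - b) * f' \<xi>"
    by blast
  with that[of \<xi>] show ?thesis by (simp add: algebra_simps)
qed

lemma tanh_diff_le:
  fixes a b :: real
  assumes "a \<le> b"
  shows "tanh b - tanh a \<le> b - a"
proof -
  have "a - tanh a \<le> b - tanh b"
    by (rule DERIV_nonneg_imp_nondecreasing[OF assms, of "\<lambda>x. x - tanh x"])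
       (auto intro!: exI[of _ "tanh _ ^ 2"] derivative_eq_intros)
  then show ?thesis by simp
qed

lemma abs_tanh_diff_le: "\<bar>tanh a - tanh b\<bar> \<le> \<bar>a - b\<bar>" for a b :: real
  using tanh_diff_le[of a b] tanh_diff_le[of b a] by (cases "a \<le> b") auto

lemma abs_tanh_le: "\<bar>tanh x\<bar> \<le> \<bar>x\<bar>" for x :: real
  using abs_tanh_diff_le[of x 0] by simp

lemma tanh_ge_cubic:
  fixes x :: real
  assumes "0 \<le> x"
  shows "x - x^3/3 \<le> tanh x"
proof -
  have "tanh 0 - 0 + 0^3/3 \<le> tanh x - x + x^3/3"
  proof (rule DERIV_nonneg_imp_nondecreasing[OF assms])
    fix y :: real
    have "tanh y ^ 2 \<le> y ^ 2"
      using abs_tanh_le[of y] by (simp add: abs_le_square_iff)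
    then show "\<exists>d. ((\<lambda>x. tanh x - x + x^3/3) has_real_derivative d) (at y) \<and> 0 \<le> d"
      by (intro exI[of _ "y^2 - tanh y ^ 2"]) (auto intro!: derivative_eq_intros)
  qed
  then show ?thesis by simp
qed

lemma tanh_le_quintic:
  fixes x :: real
  assumes "0 \<le> x" "x \<le> 1"
  shows "tanh x \<le> x - x^3/3 + 2*x^5/15"
proof -
  have "0 - 0^3/3 + 2*0^5/15 - tanh 0 \<le> x - x^3/3 + 2*x^5/15 - tanh x"
  proof (rule DERIV_nonneg_imp_nondecreasing[OF assms(1)])
    fix y :: real
    assume "0 \<le> y" "y \<le> x"
    with assms have "y^2 \<le> 1"
      by (simp add: power_le_one)
    with \<open>0 \<le> y\<close> have "y * y^2 \<le> y"
      using mult_left_mono[of "y^2" 1 y] by simp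
    then have "y^3 \<le> y"
      by (simp add: power3_eq_cube power2_eq_square)
    with \<open>0 \<le> y\<close> have "0 \<le> y - y^3/3"
      by linarith
    then have "(y - y^3/3)^2 \<le> tanh y ^ 2"
      using tanh_ge_cubic[OF \<open>0 \<le> y\<close>] by (intro power_mono)
    moreover have "(y - y^3/3)^2 = y^2 - 2*y^4/3 + y^6/9"
      by (simp add: power2_eq_square power3_eq_cube power4_eq_xxxx eval_nat_numeral algebra_simps)
    moreover have "0 \<le> y^6/9"
      by simp
    ultimately have "0 \<le> tanh y ^ 2 - y^2 + 2*y^4/3"
      by linarith
    then show "\<exists>d. ((\<lambda>x. x - x^3/3 + 2*x^5/15 - tanh x) has_real_derivative d) (at y) \<and> 0 \<le> d"
      by (intro exI[of _ "tanh y ^ 2 - y^2 + 2*y^4/3"]) (auto intro!: derivative_eq_intros)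
  qed
  then show ?thesis by simp
qed

lemma tanh_linearization_error:
  fixes x y :: real
  shows "\<bar>tanh y - tanh x - (y - x) * (1 - tanh x ^ 2)\<bar> \<le> 2 * (y - x)^2"
proof -
  define g where "g z = tanh z - (z - x) * (1 - tanh x ^ 2)" for z
  have "(g has_real_derivative tanh x ^ 2 - tanh z ^ 2) (at z)" for z
    unfolding g_def by (auto intro!: derivative_eq_intros)
  then obtain \<xi> where \<xi>: "\<bar>\<xi> - x\<bar> \<le> \<bar>y - x\<bar>" "g y - g x = (y - x) * (tanh x ^ 2 - tanh \<xi> ^ 2)"
    by (rule MVT_symmetric)
  have "\<bar>tanh x ^ 2 - tanh \<xi> ^ 2\<bar> = \<bar>tanh x - tanh \<xi>\<bar> * \<bar>tanh x + tanh \<xi>\<bar>"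
    by (simp add: power2_eq_square abs_mult[symmetric] algebra_simps)
  also have "\<dots> \<le> \<bar>y - x\<bar> * 2"
    using abs_tanh_diff_le[of x \<xi>] tanh_real_bounds[of x] tanh_real_bounds[of \<xi>] \<xi>(1)
    by (intro mult_mono) auto
  finally have "\<bar>y - x\<bar> * \<bar>tanh x ^ 2 - tanh \<xi> ^ 2\<bar> \<le> \<bar>y - x\<bar> * (\<bar>y - x\<bar> * 2)"
    by (rule mult_left_mono) simp
  moreover have "tanh y - tanh x - (y - x) * (1 - tanh x ^ 2) = (y - x) * (tanh x ^ 2 - tanh \<xi> ^ 2)"
    using \<xi>(2) by (simp add: g_def)
  moreover have "\<bar>y - x\<bar> * (\<bar>y - x\<bar> * 2) = 2 * (y - x)^2"
    by (simp add: power2_eq_square abs_mult_self_eq)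
  ultimately show ?thesis
    by (simp add: abs_mult)
qed

lemma abs_tanh_cubic_error:
  fixes m :: real
  assumes "\<bar>m\<bar> \<le> 1"
  shows "\<bar>m - tanh m - m^3/3\<bar> \<le> 2/15 * \<bar>m\<bar>^5"
proof -
  have "\<bar>x - tanh x - x^3/3\<bar> \<le> 2/15 * x^5" if "0 \<le> x" "x \<le> 1" for x :: real
    using tanh_ge_cubic[of x] tanh_le_quintic[of x] that by (simp add: abs_le_iff)
  from this[of "\<bar>m\<bar>"] assms show ?thesis
    by (cases "0 \<le> m") (simp_all add: abs_minus_commute)
qed

lemma tanh_quartic_lower:
  fixes m :: real
  assumes "\<bar>m\<bar> \<le> 1"
  shows "m^4/5 \<le> m * (m - tanh m)"
proof -
  have "x^4/5 \<le> x * (x - tanh x)" if "0 \<le> x" "x \<le> 1" for x :: real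
  proof -
    have "x^2 \<le> 1"
      using that by (simp add: power_le_one)
    then have "x^4 * x^2 \<le> x^4"
      using mult_left_mono[of "x^2" 1 "x^4"] by simp
    then have "x^4/5 \<le> x * (x^3/3 - 2*x^5/15)"
      by (simp add: algebra_simps eval_nat_numeral)
    also have "\<dots> \<le> x * (x - tanh x)"
      using tanh_le_quintic[OF that] that by (intro mult_left_mono) auto
    finally show ?thesis .
  qed
  from this[of "\<bar>m\<bar>"] assms show ?thesis
    by (cases "0 \<le> m") (simp_all add: algebra_simps)
qed

lemma mult_tanh_scale_le:
  fixes m t :: real
  assumes "0 \<le> t" "t \<le> 1"
  shows "m * tanh (t * m) \<le> m * tanh m"
proof (cases "0 \<le> m")
  case True
  with assms have "t * m \<le> m"
    by (simp add: mult_left_le_one_le)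
  with True show ?thesis
    by (intro mult_left_mono) auto
next
  case False
  with assms have "m \<le> t * m"
    by (simp add: mult_le_cancel_right2)
  with False show ?thesis
    by (intro mult_left_mono_neg) auto
qed

lemma abs_cube_scale_diff_le:
  fixes m e :: real
  assumes "0 \<le> e" "e \<le> 1"
  shows "\<bar>((1 - e) * m)^3 - m^3\<bar> \<le> 3 * e * \<bar>m\<bar>^3"
proof -
  have "e^2 \<le> e"
    using assms mult_left_mono[of e 1 e] by (simp add: power2_eq_square)
  with assms have q: "0 \<le> 3 - 3*e + e^2" "3 - 3*e + e^2 \<le> 3"
    by auto
  have "((1 - e) * m)^3 - m^3 = - (m^3 * (e * (3 - 3*e + e^2)))"
    by (simp add: power_mult_distrib power2_eq_square power3_eq_cube algebra_simps)
  then have "\<bar>((1 - e) * m)^3 - m^3\<bar> = \<bar>m\<bar>^3 * e * (3 - 3*e + e^2)"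
    using assms q by (simp add: abs_mult power_abs)
  also have "\<dots> \<le> \<bar>m\<bar>^3 * e * 3"
    using assms q by (intro mult_left_mono) auto
  finally show ?thesis
    by (simp add: algebra_simps)
qed

section \<open>Flip rates of the Glauber step\<close>

text \<open>For \<open>m = S/n\<close> and \<open>e = 1/n\<close>, the probabilities that the Glauber step picks a \<open>+1\<close> spin and
  flips it, resp. a \<open>-1\<close> spin and flips it.\<close>
definition flip_down_rate :: "real \<Rightarrow> real \<Rightarrow> real" where
  "flip_down_rate m e = (1 + m)/2 * ((1 - tanh (m - e))/2)"

definition flip_up_rate :: "real \<Rightarrow> real \<Rightarrow> real" where
  "flip_up_rate m e = (1 - m)/2 * ((1 + tanh (m + e))/2)"

lemma flip_down_rate_nonneg: "\<bar>m\<bar> \<le> 1 \<Longrightarrow> 0 \<le> flip_down_rate m e"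
  unfolding flip_down_rate_def using tanh_real_lt_1[of "m - e"] by simp

lemma flip_up_rate_nonneg: "\<bar>m\<bar> \<le> 1 \<Longrightarrow> 0 \<le> flip_up_rate m e"
  unfolding flip_up_rate_def using tanh_real_gt_neg1[of "m + e"] by simp

lemma flip_rates_diff_eq:
  "2 * (flip_down_rate m e - flip_up_rate m e) =
     m - ((1 + m)/2 * tanh (m - e) + (1 - m)/2 * tanh (m + e))"
  by (simp add: flip_down_rate_def flip_up_rate_def field_simps)

lemma flip_rates_sum_eq:
  "2 * (flip_down_rate m e + flip_up_rate m e) =
     1 - ((1 + m)/2 * tanh (m - e) - (1 - m)/2 * tanh (m + e))"
  by (simp add: flip_down_rate_def flip_up_rate_def field_simps)

text \<open>The weights average the two arguments to \<open>(1 - e) * m\<close>, so the first-order terms of the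
  linearisation at that point cancel.\<close>
lemma tanh_mixture_approx:
  fixes m e :: real
  assumes "\<bar>m\<bar> \<le> 1" "0 \<le> e"
  shows "\<bar>(1 + m)/2 * tanh (m - e) + (1 - m)/2 * tanh (m + e) - tanh ((1 - e) * m)\<bar>
    \<le> 2 * e^2"
proof -
  define \<mu> where "\<mu> = (1 - e) * m"
  define R where "R x = tanh x - tanh \<mu> - (x - \<mu>) * (1 - tanh \<mu> ^ 2)" for x
  have R_le: "\<bar>R x\<bar> \<le> 2 * (x - \<mu>)^2" for x
    unfolding R_def by (rule tanh_linearization_error)
  have w: "0 \<le> (1 + m)/2" "0 \<le> (1 - m)/2"
    using assms by auto
  have "(1 + m)/2 * tanh (m - e) + (1 - m)/2 * tanh (m + e) - tanh \<mu>
      = (1 + m)/2 * R (m - e) + (1 - m)/2 * R (m + e)"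
    by (simp add: R_def \<mu>_def field_simps)
  also have "\<bar>\<dots>\<bar> \<le> (1 + m)/2 * (2 * (e * (1 - m))^2) + (1 - m)/2 * (2 * (e * (1 + m))^2)"
  proof -
    have "\<bar>R (m - e)\<bar> \<le> 2 * (e * (1 - m))^2" "\<bar>R (m + e)\<bar> \<le> 2 * (e * (1 + m))^2"
      using R_le[of "m - e"] R_le[of "m + e"] by (simp_all add: \<mu>_def power2_eq_square algebra_simps)
    from mult_left_mono[OF this(1) w(1)] mult_left_mono[OF this(2) w(2)] w show ?thesis
      using abs_triangle_ineq[of "(1 + m)/2 * R (m - e)" "(1 - m)/2 * R (m + e)"]
      by (simp add: abs_mult)
  qed
  also have "\<dots> = 2 * e^2 * (1 - m^2)"
    by (simp add: field_simps power2_eq_square)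
  also have "\<dots> \<le> 2 * e^2"
    using assms by (simp add: mult_left_le)
  finally show ?thesis
    by (simp add: \<mu>_def)
qed

lemma tanh_skew_approx:
  fixes m e :: real
  assumes "\<bar>m\<bar> \<le> 1" "0 \<le> e"
  shows "\<bar>(1 + m)/2 * tanh (m - e) - (1 - m)/2 * tanh (m + e) - m * tanh m\<bar> \<le> e"
proof -
  have w: "0 \<le> (1 + m)/2" "0 \<le> (1 - m)/2"
    using assms by auto
  have "\<bar>tanh (m - e) - tanh m\<bar> \<le> e" "\<bar>tanh (m + e) - tanh m\<bar> \<le> e"
    using abs_tanh_diff_le[of "m - e" m] abs_tanh_diff_le[of "m + e" m] assms by auto
  with w have "\<bar>(1 + m)/2 * (tanh (m - e) - tanh m) - (1 - m)/2 * (tanh (m + e) - tanh m)\<bar>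
      \<le> (1 + m)/2 * e + (1 - m)/2 * e"
    by (intro order_trans[OF abs_triangle_ineq4] add_mono) (auto simp: abs_mult intro: mult_left_mono)
  then show ?thesis
    by (simp add: field_simps)
qed

lemma flip_rates_drift_quartic_lower:
  fixes m e :: real
  assumes "\<bar>m\<bar> \<le> 1" "0 \<le> e" "e \<le> 1"
  shows "m^4/5 - 2 * e^2 \<le> 2 * m * (flip_down_rate m e - flip_up_rate m e)"
proof -
  define T where "T = (1 + m)/2 * tanh (m - e) + (1 - m)/2 * tanh (m + e)"
  define \<mu> where "\<mu> = (1 - e) * m"
  have "\<bar>m * (tanh \<mu> - T)\<bar> \<le> 1 * (2 * e^2)"
    using tanh_mixture_approx[OF assms(1,2)] assms(1)
    unfolding abs_mult T_def \<mu>_def by (intro mult_mono) (auto simp: abs_minus_commute)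
  moreover have "m * tanh \<mu> \<le> m * tanh m"
    unfolding \<mu>_def using assms by (intro mult_tanh_scale_le) auto
  moreover have "m^4/5 \<le> m * (m - tanh m)"
    using tanh_quartic_lower[OF assms(1)] .
  ultimately have "m^4/5 - 2 * e^2 \<le> m * (m - T)"
    by (simp add: abs_le_iff algebra_simps)
  also have "m * (m - T) = m * (2 * (flip_down_rate m e - flip_up_rate m e))"
    unfolding T_def flip_rates_diff_eq ..
  finally show ?thesis
    by (simp add: algebra_simps)
qed

lemma flip_rates_drift_cubic_error:
  fixes m e :: real
  assumes "\<bar>m\<bar> \<le> 1" "0 \<le> e" "e \<le> 1"
  shows "\<bar>2 * (flip_down_rate m e - flip_up_rate m e) - m^3/3\<bar>
    \<le> 2/15 * \<bar>m\<bar>^5 + e * \<bar>m\<bar> + e * \<bar>m\<bar>^3 + 2 * e^2"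
proof -
  define T where "T = (1 + m)/2 * tanh (m - e) + (1 - m)/2 * tanh (m + e)"
  define \<mu> where "\<mu> = (1 - e) * m"
  define a b c d where "a = \<mu> - tanh \<mu> - \<mu>^3/3" and "b = m - \<mu>" and "c = \<mu>^3 - m^3"
    and "d = tanh \<mu> - T"
  have \<mu>_le: "\<bar>\<mu>\<bar> \<le> \<bar>m\<bar>"
    unfolding \<mu>_def using assms by (simp add: abs_mult mult_left_le_one_le)
  have "m - T - m^3/3 = a + b + c/3 + d"
    by (simp add: a_def b_def c_def d_def field_simps)
  then have "\<bar>m - T - m^3/3\<bar> \<le> \<bar>a\<bar> + \<bar>b\<bar> + \<bar>c\<bar>/3 + \<bar>d\<bar>"
    using abs_triangle_ineq[of "a + b + c/3" d] abs_triangle_ineq[of "a + b" "c/3"]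
      abs_triangle_ineq[of a b]
    by (simp add: abs_divide)
  also have "\<dots> \<le> 2/15 * \<bar>m\<bar>^5 + e * \<bar>m\<bar> + (3 * e * \<bar>m\<bar>^3)/3 + 2 * e^2"
  proof (intro add_mono divide_right_mono)
    have "\<bar>a\<bar> \<le> 2/15 * \<bar>\<mu>\<bar>^5"
      unfolding a_def using \<mu>_le assms(1) by (intro abs_tanh_cubic_error) simp
    also have "\<dots> \<le> 2/15 * \<bar>m\<bar>^5"
      using \<mu>_le by (simp add: power_mono)
    finally show "\<bar>a\<bar> \<le> 2/15 * \<bar>m\<bar>^5" .
    show "\<bar>b\<bar> \<le> e * \<bar>m\<bar>"
      unfolding b_def \<mu>_def using assms by (simp add: algebra_simps abs_mult)
    show "\<bar>c\<bar> \<le> 3 * e * \<bar>m\<bar>^3"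
      unfolding c_def \<mu>_def using assms(2,3) by (rule abs_cube_scale_diff_le)
    show "\<bar>d\<bar> \<le> 2 * e^2"
      using tanh_mixture_approx[OF assms(1,2)] by (simp add: d_def T_def \<mu>_def abs_minus_commute)
  qed simp
  finally show ?thesis
    unfolding flip_rates_diff_eq T_def by simp
qed

lemma flip_rates_sum_le:
  fixes m e :: real
  assumes "\<bar>m\<bar> \<le> 1" "0 \<le> e"
  shows "2 * (flip_down_rate m e + flip_up_rate m e) \<le> 1 + e"
proof -
  have "0 \<le> m * tanh m"
    by (auto simp: zero_le_mult_iff)
  with tanh_skew_approx[OF assms] show ?thesis
    unfolding flip_rates_sum_eq by (simp add: abs_le_iff)
qed

lemma flip_rates_sum_approx:
  fixes m e :: real
  assumes "\<bar>m\<bar> \<le> 1" "0 \<le> e"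
  shows "\<bar>1 - 2 * (flip_down_rate m e + flip_up_rate m e)\<bar> \<le> m^2 + e"
proof -
  have "0 \<le> m * tanh m"
    by (auto simp: zero_le_mult_iff)
  moreover have "m * tanh m \<le> \<bar>m\<bar> * \<bar>m\<bar>"
    using abs_tanh_le[of m] abs_ge_self[of "m * tanh m"] mult_left_mono[of "\<bar>tanh m\<bar>" "\<bar>m\<bar>" "\<bar>m\<bar>"]
    by (simp add: abs_mult)
  ultimately show ?thesis
    using tanh_skew_approx[OF assms]
    unfolding flip_rates_sum_eq by (simp add: abs_le_iff power2_eq_square)
qed

section \<open>The Curie-Weiss measure and the Glauber step\<close>

definition spin_sum :: "nat \<Rightarrow> (nat \<Rightarrow> real) \<Rightarrow> real" where
  "spin_sum n \<sigma> = (\<Sum>i<n. \<sigma> i)"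

definition magnetization :: "nat \<Rightarrow> (nat \<Rightarrow> real) \<Rightarrow> real" where
  "magnetization n \<sigma> = spin_sum n \<sigma> / real n"

lemma finite_spins: "finite (spins n)"
  unfolding spins_def by (intro finite_PiE) auto

lemma spins_nonempty: "spins n \<noteq> {}"
  unfolding spins_def by (simp add: PiE_eq_empty_iff)

lemma spin_values: "\<sigma> \<in> spins n \<Longrightarrow> i < n \<Longrightarrow> \<sigma> i \<in> {-1, 1}"
  unfolding spins_def by auto

lemma spins_fun_upd: "\<sigma> \<in> spins n \<Longrightarrow> i < n \<Longrightarrow> s \<in> {-1, 1} \<Longrightarrow> \<sigma>(i := s) \<in> spins n"
  unfolding spins_def by (auto simp: PiE_iff extensional_def)

lemma spin_sum_fun_upd:
  assumes "i < n"
  shows "spin_sum n (\<sigma>(i := s)) = spin_sum n \<sigma> - \<sigma> i + s"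
proof -
  have "(\<Sum>j\<in>{..<n} - {i}. (\<sigma>(i := s)) j) = (\<Sum>j\<in>{..<n} - {i}. \<sigma> j)"
    by (intro sum.cong) auto
  with assms show ?thesis
    unfolding spin_sum_def by (simp add: sum.remove[of "{..<n}" i])
qed

lemma sum_over_spins:
  assumes "\<sigma> \<in> spins n"
  shows "(\<Sum>i<n. g (\<sigma> i)) = (real n + spin_sum n \<sigma>)/2 * g 1 + (real n - spin_sum n \<sigma>)/2 * g (-1)"
proof -
  have "g (\<sigma> i) = (g 1 + g (-1))/2 + \<sigma> i * ((g 1 - g (-1))/2)" if "i < n" for i
    using spin_values[OF assms that] by (auto simp: field_simps)
  then have "(\<Sum>i<n. g (\<sigma> i)) = real n * ((g 1 + g (-1))/2) + spin_sum n \<sigma> * ((g 1 - g (-1))/2)"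
    by (simp add: sum.distrib spin_sum_def sum_distrib_right)
  then show ?thesis
    by (simp add: field_simps)
qed

lemma abs_magnetization_le:
  assumes "\<sigma> \<in> spins n"
  shows "\<bar>magnetization n \<sigma>\<bar> \<le> 1"
proof -
  have "\<bar>spin_sum n \<sigma>\<bar> \<le> (\<Sum>i<n. \<bar>\<sigma> i\<bar>)"
    unfolding spin_sum_def by (rule sum_abs)
  also have "\<dots> = real n"
    using sum_over_spins[OF assms, of abs] by (simp add: field_simps)
  finally show ?thesis
    by (auto simp: magnetization_def abs_divide divide_le_eq_1)
qed

lemma sum_upper_pairs_eq:
  fixes f :: "nat \<Rightarrow> real"
  shows "2 * (\<Sum>i<n. \<Sum>j\<in>{i<..<n}. f i * f j) = (\<Sum>i<n. f i)^2 - (\<Sum>i<n. f i ^ 2)"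
proof (induction n)
  case 0
  then show ?case by simp
next
  case (Suc n)
  have "{i<..<Suc n} = insert n {i<..<n}" if "i < n" for i
    using that by auto
  moreover have "{n<..<Suc n} = {}"
    by auto
  ultimately have "(\<Sum>i<Suc n. \<Sum>j\<in>{i<..<Suc n}. f i * f j)
      = (\<Sum>i<n. \<Sum>j\<in>{i<..<n}. f i * f j) + f n * (\<Sum>i<n. f i)"
    by (simp add: sum.distrib sum_distrib_left mult.commute)
  with Suc show ?case
    by (simp add: algebra_simps power2_eq_square)
qed

lemma cw_energy_eq:
  assumes "\<sigma> \<in> spins n"
  shows "cw_energy n \<sigma> = (spin_sum n \<sigma> ^ 2 - real n) / (2 * real n)"
proof -
  have "(\<Sum>i<n. \<sigma> i ^ 2) = real n"
    using sum_over_spins[OF assms, of "\<lambda>x. x ^ 2"] by (simp add: field_simps)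
  with sum_upper_pairs_eq[of \<sigma> n]
  have pairs: "(\<Sum>i<n. \<Sum>j\<in>{i<..<n}. \<sigma> i * \<sigma> j) = (spin_sum n \<sigma> ^ 2 - real n) / 2"
    by (simp add: spin_sum_def)
  show ?thesis
    unfolding cw_energy_def pairs by simp
qed

lemma cw_Z_pos: "0 < cw_Z n"
  unfolding cw_Z_def using finite_spins spins_nonempty by (intro sum_pos) auto

lemma cw_prob_pos: "0 < cw_prob n \<sigma>"
  unfolding cw_prob_def using cw_Z_pos by simp

lemma sum_cw_prob: "(\<Sum>\<sigma>\<in>spins n. cw_prob n \<sigma>) = 1"
  unfolding cw_prob_def using cw_Z_pos[of n] by (simp add: sum_divide_distrib[symmetric] cw_Z_def)

lemma cw_cond_pos: "0 < cw_cond n \<sigma> i s"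
  unfolding cw_cond_def using cw_prob_pos by (simp add: add_pos_pos)

lemma cw_cond_sum: "cw_cond n \<sigma> i 1 + cw_cond n \<sigma> i (-1) = 1"
  unfolding cw_cond_def using cw_prob_pos[of n "\<sigma>(i := 1)"] cw_prob_pos[of n "\<sigma>(i := -1)"]
  by (simp add: add_divide_distrib[symmetric])

lemma exp_ratio_eq_tanh:
  fixes h s :: real
  assumes "s \<in> {-1, 1}"
  shows "exp (s * h) / (exp h + exp (- h)) = (1 + s * tanh h) / 2"
proof -
  have "0 < exp h + exp (- h)"
    by (simp add: add_pos_pos)
  with assms show ?thesis
    by (auto simp: tanh_altdef field_simps)
qed

text \<open>Only the pair interactions of spin \<open>i\<close> depend on its value, and they sum to
  \<open>\<sigma> i * (S - \<sigma> i) / n\<close>.\<close>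
lemma cw_cond_eq:
  assumes "\<sigma> \<in> spins n" "i < n" "s \<in> {-1, 1}"
  shows "cw_cond n \<sigma> i s = (1 + s * tanh ((spin_sum n \<sigma> - \<sigma> i) / real n)) / 2"
proof -
  define h where "h = (spin_sum n \<sigma> - \<sigma> i) / real n"
  define c where "c = exp (((spin_sum n \<sigma> - \<sigma> i)^2 + 1 - real n) / (2 * real n)) / cw_Z n"
  have "cw_prob n (\<sigma>(i := t)) = c * exp (t * h)" if "t \<in> {-1, 1}" for t
  proof -
    have "cw_energy n (\<sigma>(i := t)) = ((spin_sum n \<sigma> - \<sigma> i + t)^2 - real n) / (2 * real n)"
      using cw_energy_eq[OF spins_fun_upd[OF assms(1,2) that]] spin_sum_fun_upd[OF assms(2)] by simp
    also have "\<dots> = ((spin_sum n \<sigma> - \<sigma> i)^2 + 1 - real n) / (2 * real n) + t * h"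
      using that assms(2) unfolding h_def by (auto simp: field_simps power2_eq_square)
    finally show ?thesis
      by (simp add: cw_prob_def c_def exp_add)
  qed
  moreover have "0 < c"
    using cw_Z_pos[of n] by (simp add: c_def)
  ultimately have "cw_cond n \<sigma> i s = exp (s * h) / (exp h + exp (- h))"
    using assms(3) by (simp add: cw_cond_def distrib_left[symmetric])
  also have "\<dots> = (1 + s * tanh h) / 2"
    using assms(3) by (rule exp_ratio_eq_tanh)
  finally show ?thesis
    unfolding h_def .
qed

definition gibbs_expect :: "nat \<Rightarrow> ((nat \<Rightarrow> real) \<Rightarrow> real) \<Rightarrow> real" where
  "gibbs_expect n g = (\<Sum>\<sigma>\<in>spins n. cw_prob n \<sigma> * g \<sigma>)"

definition step_expect ::
    "nat \<Rightarrow> ((nat \<Rightarrow> real) \<times> nat \<times> real \<Rightarrow> real) \<Rightarrow> (nat \<Rightarrow> real) \<Rightarrow> real" where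
  "step_expect n F \<sigma> = (1 / real n) * (\<Sum>i<n. \<Sum>s\<in>{-1, 1}. cw_cond n \<sigma> i s * F (\<sigma>, i, s))"

lemma gibbs_expect_mono:
  "(\<And>\<sigma>. \<sigma> \<in> spins n \<Longrightarrow> f \<sigma> \<le> g \<sigma>) \<Longrightarrow> gibbs_expect n f \<le> gibbs_expect n g"
  unfolding gibbs_expect_def using cw_prob_pos by (intro sum_mono mult_left_mono) (auto intro: less_imp_le)

lemma gibbs_expect_add: "gibbs_expect n (\<lambda>\<sigma>. f \<sigma> + g \<sigma>) = gibbs_expect n f + gibbs_expect n g"
  unfolding gibbs_expect_def by (simp add: sum.distrib distrib_left)

lemma gibbs_expect_cmult: "gibbs_expect n (\<lambda>\<sigma>. c * f \<sigma>) = c * gibbs_expect n f"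
  unfolding gibbs_expect_def by (simp add: sum_distrib_left algebra_simps)

lemma gibbs_expect_const: "gibbs_expect n (\<lambda>\<sigma>. c) = c"
  unfolding gibbs_expect_def using sum_cw_prob[of n] by (simp add: sum_distrib_right[symmetric])

lemma gibbs_expect_cong:
  "(\<And>\<sigma>. \<sigma> \<in> spins n \<Longrightarrow> f \<sigma> = g \<sigma>) \<Longrightarrow> gibbs_expect n f = gibbs_expect n g"
  unfolding gibbs_expect_def by (intro sum.cong) auto

lemma sum_pr_block_eq:
  "(\<Sum>\<eta>\<in>B \<times> {..<n} \<times> {-1, 1}. pr n \<eta> * F \<eta>) = (\<Sum>\<sigma>\<in>B. cw_prob n \<sigma> * step_expect n F \<sigma>)"
proof -
  have "(\<Sum>\<eta>\<in>B \<times> {..<n} \<times> {-1, 1}. pr n \<eta> * F \<eta>)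
      = (\<Sum>\<sigma>\<in>B. \<Sum>i<n. \<Sum>s\<in>{-1, 1}. pr n (\<sigma>, i, s) * F (\<sigma>, i, s))"
    unfolding sum.cartesian_product by (simp add: split_def)
  then show ?thesis
    by (simp add: pr_def step_expect_def sum_distrib_left algebra_simps)
qed

lemma Ex_eq_gibbs_expect_step_expect: "Ex n F = gibbs_expect n (step_expect n F)"
  unfolding Ex_def omega_def gibbs_expect_def by (rule sum_pr_block_eq)

lemma step_expect_fst:
  assumes "1 \<le> n"
  shows "step_expect n (\<lambda>\<eta>. g (fst \<eta>)) \<sigma> = g \<sigma>"
proof -
  have "(\<Sum>s\<in>{-1, 1::real}. cw_cond n \<sigma> i s * g \<sigma>) = g \<sigma>" for i
    using cw_cond_sum[of n \<sigma> i] by (simp add: distrib_right[symmetric])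
  with assms show ?thesis
    by (simp add: step_expect_def)
qed

lemma Ex_fst:
  assumes "1 \<le> n"
  shows "Ex n (\<lambda>\<omega>. g (fst \<omega>)) = gibbs_expect n g"
  unfolding Ex_eq_gibbs_expect_step_expect by (rule gibbs_expect_cong) (rule step_expect_fst[OF assms])

lemma step_expect_spin_change:
  assumes "\<sigma> \<in> spins n" "1 \<le> n" "\<phi> 0 = 0"
    and F: "\<And>i s. i < n \<Longrightarrow> F (\<sigma>, i, s) = \<phi> (\<sigma> i - s)"
  shows "step_expect n F \<sigma> = flip_down_rate (magnetization n \<sigma>) (1 / real n) * \<phi> 2
    + flip_up_rate (magnetization n \<sigma>) (1 / real n) * \<phi> (-2)"
proof -
  define S where "S = spin_sum n \<sigma>"
  define g where "g x = (1 - x * tanh ((S - x) / real n)) / 2 * \<phi> (2 * x)" for x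
  have "(\<Sum>s\<in>{-1, 1}. cw_cond n \<sigma> i s * F (\<sigma>, i, s)) = g (\<sigma> i)" if "i < n" for i
  proof -
    from spin_values[OF assms(1) that] consider "\<sigma> i = 1" | "\<sigma> i = -1"
      by auto
    then show ?thesis
      using cw_cond_eq[OF assms(1) that] F[OF that] assms(3) by cases (simp_all add: g_def S_def)
  qed
  then have step: "step_expect n F \<sigma> = (1 / real n) * ((real n + S)/2 * g 1 + (real n - S)/2 * g (-1))"
    by (simp add: step_expect_def sum_over_spins[OF assms(1)] S_def)
  have "real n \<noteq> 0"
    using assms(2) by simp
  then show ?thesis
    unfolding step by (simp add: g_def flip_down_rate_def flip_up_rate_def magnetization_def S_def field_simps)
qed

lemma step_expect_increment:
  assumes "\<sigma> \<in> spins n"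
  shows "step_expect n (\<lambda>\<omega>. g (sigma' \<omega>) - g (fst \<omega>)) \<sigma>
    = (1 / real n) * (\<Sum>i<n. cw_cond n \<sigma> i (- \<sigma> i) * (g (\<sigma>(i := - \<sigma> i)) - g \<sigma>))"
proof -
  have "(\<Sum>s\<in>{-1, 1}. cw_cond n \<sigma> i s * (g (sigma' (\<sigma>, i, s)) - g (fst (\<sigma>, i, s))))
      = cw_cond n \<sigma> i (- \<sigma> i) * (g (\<sigma>(i := - \<sigma> i)) - g \<sigma>)" if "i \<in> {..<n}" for i
  proof -
    from that spin_values[OF assms] consider "\<sigma> i = 1" | "\<sigma> i = -1"
      by fastforce
    then show ?thesis
      by cases (simp_all add: sigma'_def fun_upd_idem)
  qed
  then have "(\<Sum>i<n. \<Sum>s\<in>{-1, 1}. cw_cond n \<sigma> i s * (g (sigma' (\<sigma>, i, s)) - g (fst (\<sigma>, i, s))))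
      = (\<Sum>i<n. cw_cond n \<sigma> i (- \<sigma> i) * (g (\<sigma>(i := - \<sigma> i)) - g \<sigma>))"
    by (rule sum.cong[OF refl])
  then show ?thesis
    unfolding step_expect_def by (simp only:)
qed

text \<open>Detailed balance: \<open>cw_prob n \<sigma> * cw_cond n \<sigma> i (- \<sigma> i)\<close> does not change when spin \<open>i\<close>
  of \<open>\<sigma>\<close> is flipped.\<close>
lemma glauber_flip_balance:
  assumes "i < n"
  shows "(\<Sum>\<sigma>\<in>spins n. cw_prob n \<sigma> * cw_cond n \<sigma> i (- \<sigma> i) * (g (\<sigma>(i := - \<sigma> i)) - g \<sigma>)) = 0"
proof -
  define flip where "flip \<sigma> = \<sigma>(i := - \<sigma> i)" for \<sigma> :: "nat \<Rightarrow> real"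
  have flip_flip: "flip (flip \<sigma>) = \<sigma>" for \<sigma>
    by (simp add: flip_def)
  have balance: "cw_prob n (flip \<sigma>) * cw_cond n (flip \<sigma>) i (- flip \<sigma> i) = cw_prob n \<sigma> * cw_cond n \<sigma> i (- \<sigma> i)"
    for \<sigma>
    unfolding cw_cond_def flip_def by (simp add: algebra_simps)
  have "flip \<sigma> \<in> spins n" if "\<sigma> \<in> spins n" for \<sigma>
    unfolding flip_def using spins_fun_upd[OF that assms] spin_values[OF that assms] by auto
  then have "(\<Sum>\<sigma>\<in>spins n. cw_prob n \<sigma> * cw_cond n \<sigma> i (- \<sigma> i) * g (flip \<sigma>)) =
      (\<Sum>\<sigma>\<in>spins n. cw_prob n \<sigma> * cw_cond n \<sigma> i (- \<sigma> i) * g \<sigma>)"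
    by (intro sum.reindex_bij_witness[of _ flip flip]) (auto simp: flip_flip balance)
  then show ?thesis
    by (simp add: right_diff_distrib sum_subtractf flip_def)
qed

lemma Ex_glauber_increment: "Ex n (\<lambda>\<omega>. g (sigma' \<omega>) - g (fst \<omega>)) = 0"
proof -
  define c where "c \<sigma> i = cw_cond n \<sigma> i (- \<sigma> i) * (g (\<sigma>(i := - \<sigma> i)) - g \<sigma>)" for \<sigma> i
  have "Ex n (\<lambda>\<omega>. g (sigma' \<omega>) - g (fst \<omega>)) = gibbs_expect n (\<lambda>\<sigma>. (1 / real n) * (\<Sum>i<n. c \<sigma> i))"
    unfolding Ex_eq_gibbs_expect_step_expect c_def by (rule gibbs_expect_cong) (rule step_expect_increment)
  also have "\<dots> = (1 / real n) * (\<Sum>i<n. \<Sum>\<sigma>\<in>spins n. cw_prob n \<sigma> * c \<sigma> i)"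
    unfolding gibbs_expect_def by (simp add: sum_distrib_left sum.swap[of _ "spins n"] algebra_simps)
  also have "\<dots> = 0"
    using glauber_flip_balance by (simp add: c_def mult.assoc)
  finally show ?thesis .
qed

lemma gibbs_expect_generator_eq_0:
  assumes "1 \<le> n"
  shows "gibbs_expect n (\<lambda>\<sigma>.
      flip_down_rate (magnetization n \<sigma>) (1 / real n) * (f (spin_sum n \<sigma> - 2) - f (spin_sum n \<sigma>))
    + flip_up_rate (magnetization n \<sigma>) (1 / real n) * (f (spin_sum n \<sigma> + 2) - f (spin_sum n \<sigma>))) = 0"
    (is "gibbs_expect n ?L = 0")
proof -
  have "?L \<sigma> = step_expect n (\<lambda>\<omega>. f (spin_sum n (sigma' \<omega>)) - f (spin_sum n (fst \<omega>))) \<sigma>"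
    if "\<sigma> \<in> spins n" for \<sigma>
    by (subst step_expect_spin_change[OF that assms, where \<phi> = "\<lambda>d. f (spin_sum n \<sigma> - d) - f (spin_sum n \<sigma>)"])
      (simp_all add: sigma'_def spin_sum_fun_upd algebra_simps)
  then have "gibbs_expect n ?L
      = gibbs_expect n (step_expect n (\<lambda>\<omega>. f (spin_sum n (sigma' \<omega>)) - f (spin_sum n (fst \<omega>))))"
    by (rule gibbs_expect_cong)
  also have "\<dots> = 0"
    using Ex_glauber_increment[of n "\<lambda>\<sigma>. f (spin_sum n \<sigma>)"] by (simp only: Ex_eq_gibbs_expect_step_expect)
  finally show ?thesis .
qed

section \<open>Conditioning on \<open>W\<close>\<close>

lemma finite_tower_property:
  fixes p g :: "'a \<Rightarrow> real" and K :: "'a \<Rightarrow> 'b"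
  assumes fin: "finite \<Omega>" and p: "\<And>\<omega>. \<omega> \<in> \<Omega> \<Longrightarrow> 0 \<le> p \<omega>"
  shows "(\<Sum>\<omega>\<in>\<Omega>. p \<omega> * ((\<Sum>\<eta>\<in>{\<eta>\<in>\<Omega>. K \<eta> = K \<omega>}. p \<eta> * g \<eta>) / (\<Sum>\<eta>\<in>{\<eta>\<in>\<Omega>. K \<eta> = K \<omega>}. p \<eta>)))
    = (\<Sum>\<omega>\<in>\<Omega>. p \<omega> * g \<omega>)"
proof -
  define D where "D \<omega> = (\<Sum>\<eta>\<in>{\<eta>\<in>\<Omega>. K \<eta> = K \<omega>}. p \<eta>)" for \<omega>
  define Y where "Y \<eta> = p \<eta> * g \<eta> / D \<eta>" for \<eta>
  have block: "p \<omega> * ((\<Sum>\<eta>\<in>{\<eta>\<in>\<Omega>. K \<eta> = K \<omega>}. p \<eta> * g \<eta>) / D \<omega>)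
      = (\<Sum>\<eta>\<in>\<Omega>. if K \<eta> = K \<omega> then p \<omega> * Y \<eta> else 0)" for \<omega>
  proof -
    have "(\<Sum>\<eta>\<in>{\<eta>\<in>\<Omega>. K \<eta> = K \<omega>}. p \<eta> * g \<eta>) / D \<omega> = (\<Sum>\<eta>\<in>{\<eta>\<in>\<Omega>. K \<eta> = K \<omega>}. Y \<eta>)"
      unfolding sum_divide_distrib Y_def D_def by (rule sum.cong) auto
    then show ?thesis
      using fin by (simp add: sum_distrib_left sum.inter_filter[symmetric])
  qed
  have "(\<Sum>\<omega>\<in>\<Omega>. p \<omega> * ((\<Sum>\<eta>\<in>{\<eta>\<in>\<Omega>. K \<eta> = K \<omega>}. p \<eta> * g \<eta>) / D \<omega>))
      = (\<Sum>\<eta>\<in>\<Omega>. \<Sum>\<omega>\<in>\<Omega>. if K \<eta> = K \<omega> then p \<omega> * Y \<eta> else 0)"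
    unfolding block by (rule sum.swap)
  also have "\<dots> = (\<Sum>\<eta>\<in>\<Omega>. D \<eta> * Y \<eta>)"
  proof (rule sum.cong[OF refl])
    fix \<eta>
    have "{\<omega>\<in>\<Omega>. K \<omega> = K \<eta>} = {\<omega>\<in>\<Omega>. K \<eta> = K \<omega>}"
      by auto
    then show "(\<Sum>\<omega>\<in>\<Omega>. if K \<eta> = K \<omega> then p \<omega> * Y \<eta> else 0) = D \<eta> * Y \<eta>"
      using fin by (simp add: D_def sum_distrib_right sum.inter_filter[symmetric])
  qed
  also have "\<dots> = (\<Sum>\<eta>\<in>\<Omega>. p \<eta> * g \<eta>)"
  proof (rule sum.cong[OF refl])
    fix \<eta>
    assume "\<eta> \<in> \<Omega>"
    then have "p \<eta> \<le> D \<eta>"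
      unfolding D_def using fin p by (intro member_le_sum) auto
    with p[OF \<open>\<eta> \<in> \<Omega>\<close>] show "D \<eta> * Y \<eta> = p \<eta> * g \<eta>"
      unfolding Y_def by (cases "D \<eta> = 0") auto
  qed
  finally show ?thesis
    unfolding D_def .
qed

lemma finite_omega: "finite (omega n)"
  unfolding omega_def using finite_spins by simp

lemma pr_nonneg: "0 \<le> pr n \<omega>"
  by (simp add: pr_def split_def less_imp_le[OF cw_prob_pos] less_imp_le[OF cw_cond_pos])

lemma pr_pos:
  assumes "\<omega> \<in> omega n"
  shows "0 < pr n \<omega>"
proof -
  obtain \<sigma> i s where "\<omega> = (\<sigma>, i, s)" "i < n"
    using assms unfolding omega_def by auto
  then show ?thesis
    by (simp add: pr_def cw_prob_pos cw_cond_pos)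
qed

lemma Ex_condE_W: "Ex n (condE_W n G) = Ex n G"
  unfolding Ex_def condE_W_def by (rule finite_tower_property[OF finite_omega pr_nonneg])

lemma Ex_abs_condE_W_le: "Ex n (\<lambda>\<omega>. \<bar>condE_W n G \<omega>\<bar>) \<le> Ex n (\<lambda>\<omega>. \<bar>G \<omega>\<bar>)"
proof -
  have "\<bar>condE_W n G \<omega>\<bar> \<le> condE_W n (\<lambda>\<eta>. \<bar>G \<eta>\<bar>) \<omega>" for \<omega>
  proof -
    have "\<bar>\<Sum>\<eta>\<in>{\<eta>\<in>omega n. W n \<eta> = W n \<omega>}. pr n \<eta> * G \<eta>\<bar>
        \<le> (\<Sum>\<eta>\<in>{\<eta>\<in>omega n. W n \<eta> = W n \<omega>}. pr n \<eta> * \<bar>G \<eta>\<bar>)"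
      using pr_nonneg by (intro order_trans[OF sum_abs] sum_mono) (simp add: abs_mult)
    moreover have "0 \<le> (\<Sum>\<eta>\<in>{\<eta>\<in>omega n. W n \<eta> = W n \<omega>}. pr n \<eta>)"
      using pr_nonneg by (intro sum_nonneg) auto
    ultimately show ?thesis
      unfolding condE_W_def by (simp add: abs_divide divide_right_mono)
  qed
  then have "Ex n (\<lambda>\<omega>. \<bar>condE_W n G \<omega>\<bar>) \<le> Ex n (condE_W n (\<lambda>\<eta>. \<bar>G \<eta>\<bar>))"
    unfolding Ex_def using pr_nonneg by (intro sum_mono mult_left_mono) auto
  then show ?thesis
    by (simp only: Ex_condE_W)
qed

lemma W_level_set_eq:
  "{\<eta>\<in>omega n. W n \<eta> = w} = {\<sigma>\<in>spins n. Wfun n \<sigma> = w} \<times> {..<n} \<times> {-1, 1}"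
  unfolding omega_def W_def by auto

lemma condE_W_step_expect:
  assumes "1 \<le> n"
  shows "condE_W n (\<lambda>\<eta>. step_expect n F (fst \<eta>)) = condE_W n F"
proof
  fix \<omega>
  show "condE_W n (\<lambda>\<eta>. step_expect n F (fst \<eta>)) \<omega> = condE_W n F \<omega>"
    unfolding condE_W_def W_level_set_eq sum_pr_block_eq step_expect_fst[OF assms] ..
qed

lemma condE_W_diff_W:
  assumes "\<omega> \<in> omega n"
  shows "condE_W n (\<lambda>\<eta>. G \<eta> - h (W n \<eta>)) \<omega> = condE_W n G \<omega> - h (W n \<omega>)"
proof -
  define B where "B = {\<eta>\<in>omega n. W n \<eta> = W n \<omega>}"
  have "pr n \<omega> \<le> (\<Sum>\<eta>\<in>B. pr n \<eta>)"
    unfolding B_def using assms finite_omega pr_nonneg by (intro member_le_sum) auto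
  with pr_pos[OF assms] have "(\<Sum>\<eta>\<in>B. pr n \<eta>) \<noteq> 0"
    by linarith
  moreover have "(\<Sum>\<eta>\<in>B. pr n \<eta> * (G \<eta> - h (W n \<eta>)))
      = (\<Sum>\<eta>\<in>B. pr n \<eta> * G \<eta>) - h (W n \<omega>) * (\<Sum>\<eta>\<in>B. pr n \<eta>)"
    unfolding B_def by (simp add: right_diff_distrib sum_subtractf sum_distrib_left mult.commute)
  ultimately show ?thesis
    unfolding condE_W_def B_def[symmetric] by (simp add: field_simps)
qed

lemma Ex_abs_condE_W_diff_le:
  assumes "1 \<le> n"
  shows "Ex n (\<lambda>\<omega>. \<bar>condE_W n F \<omega> - h (W n \<omega>)\<bar>)
    \<le> gibbs_expect n (\<lambda>\<sigma>. \<bar>step_expect n F \<sigma> - h (Wfun n \<sigma>)\<bar>)"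
proof -
  define G where "G \<eta> = step_expect n F (fst \<eta>) - h (W n \<eta>)" for \<eta>
  have "condE_W n G \<omega> = condE_W n F \<omega> - h (W n \<omega>)" if "\<omega> \<in> omega n" for \<omega>
    unfolding G_def condE_W_diff_W[OF that, where G = "\<lambda>\<eta>. step_expect n F (fst \<eta>)" and h = h]
      condE_W_step_expect[OF assms] ..
  then have "Ex n (\<lambda>\<omega>. \<bar>condE_W n F \<omega> - h (W n \<omega>)\<bar>) = Ex n (\<lambda>\<omega>. \<bar>condE_W n G \<omega>\<bar>)"
    unfolding Ex_def by (intro sum.cong) auto
  also have "\<dots> \<le> Ex n (\<lambda>\<omega>. \<bar>G \<omega>\<bar>)"
    by (rule Ex_abs_condE_W_le)
  also have "\<dots> = gibbs_expect n (\<lambda>\<sigma>. \<bar>step_expect n F \<sigma> - h (Wfun n \<sigma>)\<bar>)"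
    unfolding G_def W_def by (rule Ex_fst[OF assms])
  finally show ?thesis .
qed

section \<open>Moments of the magnetisation\<close>

definition glauber_drift :: "nat \<Rightarrow> (nat \<Rightarrow> real) \<Rightarrow> real" where
  "glauber_drift n \<sigma> = 2 * (flip_down_rate (magnetization n \<sigma>) (1 / real n)
    - flip_up_rate (magnetization n \<sigma>) (1 / real n))"

definition glauber_flip_prob :: "nat \<Rightarrow> (nat \<Rightarrow> real) \<Rightarrow> real" where
  "glauber_flip_prob n \<sigma> = flip_down_rate (magnetization n \<sigma>) (1 / real n)
    + flip_up_rate (magnetization n \<sigma>) (1 / real n)"

lemma W_diff_eq:
  assumes "i < n"
  shows "W n (\<sigma>, i, s) - W' n (\<sigma>, i, s) = (\<sigma> i - s) / real n powr (3/4)"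
proof -
  have "Wfun n \<tau> = spin_sum n \<tau> / real n powr (3/4)" for \<tau>
    by (simp add: Wfun_def spin_sum_def)
  with assms show ?thesis
    by (simp add: W_def W'_def sigma'_def spin_sum_fun_upd diff_divide_distrib[symmetric])
qed

lemma step_expect_W_diff:
  assumes "\<sigma> \<in> spins n" "1 \<le> n"
  shows "step_expect n (\<lambda>\<eta>. W n \<eta> - W' n \<eta>) \<sigma> = glauber_drift n \<sigma> / real n powr (3/4)"
  by (subst step_expect_spin_change[OF assms, where \<phi> = "\<lambda>d. d / real n powr (3/4)"])
    (use assms(2) in \<open>simp_all add: W_diff_eq glauber_drift_def field_simps\<close>)

lemma step_expect_W_diff_sq:
  assumes "\<sigma> \<in> spins n" "1 \<le> n"
  shows "step_expect n (\<lambda>\<eta>. (W n \<eta> - W' n \<eta>)^2) \<sigma> = 4 * glauber_flip_prob n \<sigma> / (real n powr (3/4))^2"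
  by (subst step_expect_spin_change[OF assms, where \<phi> = "\<lambda>d. (d / real n powr (3/4))^2"])
    (use assms(2) in \<open>simp_all add: W_diff_eq glauber_flip_prob_def power_divide field_simps\<close>)

lemma spin_sum_eq_magnetization: "1 \<le> n \<Longrightarrow> spin_sum n \<sigma> = real n * magnetization n \<sigma>"
  by (simp add: magnetization_def)

lemma gibbs_expect_magnetization_drift:
  assumes "1 \<le> n"
  shows "gibbs_expect n (\<lambda>\<sigma>. magnetization n \<sigma> * glauber_drift n \<sigma>)
    = 2 * gibbs_expect n (glauber_flip_prob n) / real n"
proof -
  have "gibbs_expect n (\<lambda>\<sigma>. 4 * glauber_flip_prob n \<sigma> + (- 2 * real n) * (magnetization n \<sigma> * glauber_drift n \<sigma>))
      = 0"
    unfolding gibbs_expect_generator_eq_0[OF assms, of "\<lambda>x. x^2", symmetric]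
    by (rule gibbs_expect_cong)
      (simp add: spin_sum_eq_magnetization[OF assms] glauber_drift_def glauber_flip_prob_def
        power2_eq_square algebra_simps)
  then have "4 * gibbs_expect n (glauber_flip_prob n)
      + (- 2 * real n) * gibbs_expect n (\<lambda>\<sigma>. magnetization n \<sigma> * glauber_drift n \<sigma>) = 0"
    by (simp only: gibbs_expect_add gibbs_expect_cmult)
  then show ?thesis
    using assms by (simp add: field_simps)
qed

lemma gibbs_expect_magnetization_cube_drift:
  assumes "1 \<le> n"
  shows "gibbs_expect n (\<lambda>\<sigma>. magnetization n \<sigma> ^ 3 * glauber_drift n \<sigma>)
    = 6 * gibbs_expect n (\<lambda>\<sigma>. magnetization n \<sigma> ^ 2 * glauber_flip_prob n \<sigma>) / real n
      - 4 * gibbs_expect n (glauber_flip_prob n) / real n ^ 3"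
proof -
  let ?m = "magnetization n" and ?D = "glauber_drift n" and ?p = "glauber_flip_prob n"
  have "gibbs_expect n (\<lambda>\<sigma>. (24 * real n ^ 2) * (?m \<sigma> ^ 2 * ?p \<sigma>) + 16 * ?p \<sigma>
      + (- 4 * real n ^ 3) * (?m \<sigma> ^ 3 * ?D \<sigma>) + (- 16 * real n) * (?m \<sigma> * ?D \<sigma>)) = 0"
    unfolding gibbs_expect_generator_eq_0[OF assms, of "\<lambda>x. x^4", symmetric]
    by (rule gibbs_expect_cong)
      (simp add: spin_sum_eq_magnetization[OF assms] glauber_drift_def glauber_flip_prob_def
        power2_eq_square power3_eq_cube power4_eq_xxxx algebra_simps)
  then have "(24 * real n ^ 2) * gibbs_expect n (\<lambda>\<sigma>. ?m \<sigma> ^ 2 * ?p \<sigma>) + 16 * gibbs_expect n ?p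
      + (- 4 * real n ^ 3) * gibbs_expect n (\<lambda>\<sigma>. ?m \<sigma> ^ 3 * ?D \<sigma>)
      + (- 16 * real n) * gibbs_expect n (\<lambda>\<sigma>. ?m \<sigma> * ?D \<sigma>) = 0"
    by (simp only: gibbs_expect_add gibbs_expect_cmult)
  with assms show ?thesis
    unfolding gibbs_expect_magnetization_drift[OF assms] by (simp add: field_simps power2_eq_square power3_eq_cube)
qed

lemma glauber_flip_prob_nonneg: "\<sigma> \<in> spins n \<Longrightarrow> 0 \<le> glauber_flip_prob n \<sigma>"
  unfolding glauber_flip_prob_def
  using flip_down_rate_nonneg flip_up_rate_nonneg abs_magnetization_le by (simp add: add_nonneg_nonneg)

lemma glauber_flip_prob_le: "\<sigma> \<in> spins n \<Longrightarrow> 2 * glauber_flip_prob n \<sigma> \<le> 1 + 1 / real n"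
  unfolding glauber_flip_prob_def using flip_rates_sum_le abs_magnetization_le by simp

lemma magnetization_drift_lower:
  assumes "\<sigma> \<in> spins n" "1 \<le> n"
  shows "magnetization n \<sigma> ^ 4 / 5 - 2 / real n ^ 2 \<le> magnetization n \<sigma> * glauber_drift n \<sigma>"
  using flip_rates_drift_quartic_lower[OF abs_magnetization_le[OF assms(1)], of "1 / real n"] assms(2)
  by (simp add: glauber_drift_def power_divide algebra_simps)

lemma magnetization_cube_drift_lower:
  assumes "\<sigma> \<in> spins n" "1 \<le> n"
  shows "magnetization n \<sigma> ^ 6 / 5 - 2 / real n ^ 2 * magnetization n \<sigma> ^ 2
    \<le> magnetization n \<sigma> ^ 3 * glauber_drift n \<sigma>"
  using mult_left_mono[OF magnetization_drift_lower[OF assms], of "magnetization n \<sigma> ^ 2"]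
  by (simp add: algebra_simps eval_nat_numeral)

lemma gibbs_expect_magnetization4_le:
  assumes "1 \<le> n"
  shows "gibbs_expect n (\<lambda>\<sigma>. magnetization n \<sigma> ^ 4) \<le> 5 / real n + 15 / real n ^ 2"
proof -
  define e where "e = 1 / real n"
  have "1/5 * gibbs_expect n (\<lambda>\<sigma>. magnetization n \<sigma> ^ 4) + (- 2 * e^2)
      = gibbs_expect n (\<lambda>\<sigma>. 1/5 * magnetization n \<sigma> ^ 4 + (- 2 * e^2))"
    by (simp only: gibbs_expect_add gibbs_expect_cmult gibbs_expect_const)
  also have "\<dots> \<le> gibbs_expect n (\<lambda>\<sigma>. magnetization n \<sigma> * glauber_drift n \<sigma>)"
    using magnetization_drift_lower[OF _ assms] by (intro gibbs_expect_mono) (simp add: e_def power_divide)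
  also have "\<dots> = 2 * gibbs_expect n (glauber_flip_prob n) * e"
    unfolding gibbs_expect_magnetization_drift[OF assms] e_def by simp
  also have "\<dots> \<le> (1 + e) * e"
  proof -
    have "gibbs_expect n (\<lambda>\<sigma>. 2 * glauber_flip_prob n \<sigma>) \<le> gibbs_expect n (\<lambda>_. 1 + e)"
      using glauber_flip_prob_le unfolding e_def by (intro gibbs_expect_mono) auto
    then show ?thesis
      by (intro mult_right_mono) (simp_all add: gibbs_expect_cmult gibbs_expect_const e_def)
  qed
  finally have "gibbs_expect n (\<lambda>\<sigma>. magnetization n \<sigma> ^ 4) \<le> 5 * e + 15 * e^2"
    by (simp add: algebra_simps power2_eq_square)
  then show ?thesis
    by (simp add: e_def power_divide)
qed

lemma gibbs_expect_magnetization6_le: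
  assumes "1 \<le> n"
  shows "gibbs_expect n (\<lambda>\<sigma>. magnetization n \<sigma> ^ 6)
    \<le> (15 / real n + 25 / real n ^ 2) * gibbs_expect n (\<lambda>\<sigma>. magnetization n \<sigma> ^ 2)"
proof -
  let ?m = "magnetization n"
  define e where "e = 1 / real n"
  define E2 where "E2 = gibbs_expect n (\<lambda>\<sigma>. ?m \<sigma> ^ 2)"
  have "1/5 * gibbs_expect n (\<lambda>\<sigma>. ?m \<sigma> ^ 6) + (- 2 * e^2) * E2
      = gibbs_expect n (\<lambda>\<sigma>. 1/5 * ?m \<sigma> ^ 6 + (- 2 * e^2) * ?m \<sigma> ^ 2)"
    unfolding E2_def by (simp only: gibbs_expect_add gibbs_expect_cmult)
  also have "\<dots> \<le> gibbs_expect n (\<lambda>\<sigma>. ?m \<sigma> ^ 3 * glauber_drift n \<sigma>)"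
    using magnetization_cube_drift_lower[OF _ assms] by (intro gibbs_expect_mono) (simp add: e_def power_divide)
  also have "\<dots> \<le> 6 * gibbs_expect n (\<lambda>\<sigma>. ?m \<sigma> ^ 2 * glauber_flip_prob n \<sigma>) * e"
    unfolding gibbs_expect_magnetization_cube_drift[OF assms] e_def
    using gibbs_expect_mono[of n "\<lambda>_. 0" "glauber_flip_prob n"] glauber_flip_prob_nonneg
    by (simp add: gibbs_expect_const)
  also have "\<dots> \<le> 3 * ((1 + e) * E2) * e"
  proof -
    have "gibbs_expect n (\<lambda>\<sigma>. 2 * (?m \<sigma> ^ 2 * glauber_flip_prob n \<sigma>))
        \<le> gibbs_expect n (\<lambda>\<sigma>. (1 + e) * ?m \<sigma> ^ 2)"
    proof (rule gibbs_expect_mono)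
      fix \<sigma>
      assume "\<sigma> \<in> spins n"
      from mult_left_mono[OF glauber_flip_prob_le[OF this], of "?m \<sigma> ^ 2"]
      show "2 * (?m \<sigma> ^ 2 * glauber_flip_prob n \<sigma>) \<le> (1 + e) * ?m \<sigma> ^ 2"
        by (simp add: e_def algebra_simps)
    qed
    then have "2 * gibbs_expect n (\<lambda>\<sigma>. ?m \<sigma> ^ 2 * glauber_flip_prob n \<sigma>) \<le> (1 + e) * E2"
      unfolding E2_def by (simp only: gibbs_expect_cmult)
    then show ?thesis
      by (intro mult_right_mono) (linarith, simp add: e_def)
  qed
  finally have "gibbs_expect n (\<lambda>\<sigma>. ?m \<sigma> ^ 6) \<le> (15 * e + 25 * e^2) * E2"
    by (simp add: algebra_simps power2_eq_square)
  then show ?thesis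
    by (simp add: e_def E2_def power_divide)
qed

lemma power_Suc_le_mean:
  fixes a :: real
  assumes "0 \<le> a"
  shows "a ^ Suc k \<le> (a ^ k + a ^ (k + 2)) / 2"
proof -
  have "0 \<le> a ^ k * (a - 1)^2"
    using assms by simp
  then show ?thesis
    by (simp add: power2_eq_square algebra_simps)
qed

lemma square_le_quartic: "w^2 \<le> w^4/6 + 3/2" for w :: real
proof -
  have "0 \<le> (w^2 - 3)^2"
    by simp
  then show ?thesis
    by (simp add: power2_eq_square power4_eq_xxxx algebra_simps)
qed

lemma Wfun_eq_magnetization:
  assumes "1 \<le> n"
  shows "Wfun n \<sigma> = real n powr (1/4) * magnetization n \<sigma>"
proof -
  have "real n powr (1/4) / real n = real n powr (1/4) / real n powr 1"
    using assms by simp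
  also have "\<dots> = real n powr (1/4 - 1)"
    by (rule powr_diff[symmetric])
  also have "\<dots> = 1 / real n powr (3/4)"
    by (simp add: powr_minus_divide[symmetric])
  finally have q: "real n powr (1/4) / real n = 1 / real n powr (3/4)" .
  have "Wfun n \<sigma> = spin_sum n \<sigma> * (1 / real n powr (3/4))"
    by (simp add: Wfun_def spin_sum_def)
  also have "\<dots> = real n powr (1/4) * magnetization n \<sigma>"
    unfolding q[symmetric] by (simp add: magnetization_def)
  finally show ?thesis .
qed

lemma real_powr_quarter:
  assumes "1 \<le> n"
  shows "1 \<le> real n powr (1/4)" "(real n powr (1/4)) ^ 4 = real n"
    "real n powr (3/4) = (real n powr (1/4)) ^ 3" "real n powr (-3/2) = 1 / (real n powr (1/4)) ^ 6"
    "real n powr (-2) = 1 / real n ^ 2"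
proof -
  have k: "(real n powr (1/4)) ^ k = real n powr (real k / 4)" for k
    using assms by (simp add: powr_realpow[symmetric] powr_powr)
  show "1 \<le> real n powr (1/4)"
    using assms by (simp add: ge_one_powr_ge_zero)
  show "(real n powr (1/4)) ^ 4 = real n" "real n powr (3/4) = (real n powr (1/4)) ^ 3"
    "real n powr (-3/2) = 1 / (real n powr (1/4)) ^ 6" "real n powr (-2) = 1 / real n ^ 2"
    using k[of 4] k[of 3] k[of 6] assms by (simp_all add: powr_minus_divide powr_realpow)
qed

lemma magnetization_power_le_one: "\<sigma> \<in> spins n \<Longrightarrow> magnetization n \<sigma> ^ k \<le> 1"
  using power_le_one[OF abs_ge_zero abs_magnetization_le, of \<sigma> n k]
  by (metis abs_ge_self order_trans power_abs)

lemma gibbs_expect_W_power: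
  assumes "1 \<le> n"
  shows "gibbs_expect n (\<lambda>\<sigma>. Wfun n \<sigma> ^ k)
    = (real n powr (1/4)) ^ k * gibbs_expect n (\<lambda>\<sigma>. magnetization n \<sigma> ^ k)"
  by (simp add: Wfun_eq_magnetization[OF assms] power_mult_distrib gibbs_expect_cmult)

lemma gibbs_expect_W4_le:
  assumes "1 \<le> n"
  shows "gibbs_expect n (\<lambda>\<sigma>. Wfun n \<sigma> ^ 4) \<le> 8"
proof -
  have "gibbs_expect n (\<lambda>\<sigma>. Wfun n \<sigma> ^ 4) = real n * gibbs_expect n (\<lambda>\<sigma>. magnetization n \<sigma> ^ 4)"
    using real_powr_quarter(2)[OF assms] by (simp add: gibbs_expect_W_power[OF assms])
  also have "\<dots> \<le> 8"
  proof (cases "n \<le> 8")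
    case True
    have "gibbs_expect n (\<lambda>\<sigma>. magnetization n \<sigma> ^ 4) \<le> gibbs_expect n (\<lambda>_. 1)"
      by (rule gibbs_expect_mono) (rule magnetization_power_le_one)
    then have "real n * gibbs_expect n (\<lambda>\<sigma>. magnetization n \<sigma> ^ 4) \<le> real n * 1"
      by (intro mult_left_mono) (simp_all add: gibbs_expect_const)
    with True show ?thesis
      by simp
  next
    case False
    have "real n * gibbs_expect n (\<lambda>\<sigma>. magnetization n \<sigma> ^ 4) \<le> real n * (5 / real n + 15 / real n ^ 2)"
      using gibbs_expect_magnetization4_le[OF assms] by (intro mult_left_mono) auto
    also have "\<dots> = 5 + 15 / real n"
      using assms by (simp add: field_simps power2_eq_square)
    also have "\<dots> \<le> 8"
      using False by (simp add: field_simps)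
    finally show ?thesis .
  qed
  finally show ?thesis .
qed

lemma gibbs_expect_W2_le:
  assumes "1 \<le> n"
  shows "gibbs_expect n (\<lambda>\<sigma>. Wfun n \<sigma> ^ 2) \<le> 17/6"
proof -
  have "gibbs_expect n (\<lambda>\<sigma>. Wfun n \<sigma> ^ 2) \<le> gibbs_expect n (\<lambda>\<sigma>. 1/6 * Wfun n \<sigma> ^ 4 + 3/2)"
    by (rule gibbs_expect_mono) (simp add: square_le_quartic)
  also have "\<dots> = 1/6 * gibbs_expect n (\<lambda>\<sigma>. Wfun n \<sigma> ^ 4) + 3/2"
    by (simp only: gibbs_expect_add gibbs_expect_cmult gibbs_expect_const)
  also have "\<dots> \<le> 1/6 * 8 + 3/2"
    using gibbs_expect_W4_le[OF assms] by simp
  finally show ?thesis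
    by simp
qed

lemma gibbs_expect_W6_le:
  assumes "1 \<le> n"
  shows "gibbs_expect n (\<lambda>\<sigma>. Wfun n \<sigma> ^ 6) \<le> 340/3"
proof -
  define q where "q = real n powr (1/4)"
  define E2 where "E2 = gibbs_expect n (\<lambda>\<sigma>. magnetization n \<sigma> ^ 2)"
  have q: "q ^ 4 = real n" "0 < q"
    unfolding q_def using real_powr_quarter(1,2)[OF assms] assms by simp_all
  have "0 \<le> E2"
    unfolding E2_def using gibbs_expect_mono[of n "\<lambda>_. 0"] by (simp add: gibbs_expect_const)
  have "15 / real n + 25 / real n ^ 2 \<le> 40 / real n"
    using assms by (simp add: field_simps power2_eq_square)
  with gibbs_expect_magnetization6_le[OF assms] \<open>0 \<le> E2\<close>
  have E6: "gibbs_expect n (\<lambda>\<sigma>. magnetization n \<sigma> ^ 6) \<le> 40 / real n * E2"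
    unfolding E2_def by (meson mult_right_mono order_trans)
  have "gibbs_expect n (\<lambda>\<sigma>. Wfun n \<sigma> ^ 6) = q ^ 6 * gibbs_expect n (\<lambda>\<sigma>. magnetization n \<sigma> ^ 6)"
    by (simp add: gibbs_expect_W_power[OF assms] q_def)
  also have "\<dots> \<le> q ^ 6 * (40 / real n * E2)"
    using mult_left_mono[OF E6, of "q ^ 6"] q by simp
  also have "\<dots> = 40 * (q ^ 2 * E2)"
    using q assms by (simp add: field_simps eval_nat_numeral)
  also have "\<dots> = 40 * gibbs_expect n (\<lambda>\<sigma>. Wfun n \<sigma> ^ 2)"
    by (simp add: gibbs_expect_W_power[OF assms] E2_def q_def)
  also have "\<dots> \<le> 40 * (17/6)"
    using gibbs_expect_W2_le[OF assms] by simp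
  finally show ?thesis
    by simp
qed

lemma gibbs_expect_abs_W_power_Suc_le:
  "gibbs_expect n (\<lambda>\<sigma>. \<bar>Wfun n \<sigma>\<bar> ^ Suc k)
    \<le> 1/2 * gibbs_expect n (\<lambda>\<sigma>. \<bar>Wfun n \<sigma>\<bar> ^ k) + 1/2 * gibbs_expect n (\<lambda>\<sigma>. \<bar>Wfun n \<sigma>\<bar> ^ (k + 2))"
proof -
  have "gibbs_expect n (\<lambda>\<sigma>. \<bar>Wfun n \<sigma>\<bar> ^ Suc k)
      \<le> gibbs_expect n (\<lambda>\<sigma>. 1/2 * \<bar>Wfun n \<sigma>\<bar> ^ k + 1/2 * \<bar>Wfun n \<sigma>\<bar> ^ (k + 2))"
    using power_Suc_le_mean by (intro gibbs_expect_mono) (simp add: add_divide_distrib)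
  also have "\<dots> = 1/2 * gibbs_expect n (\<lambda>\<sigma>. \<bar>Wfun n \<sigma>\<bar> ^ k) + 1/2 * gibbs_expect n (\<lambda>\<sigma>. \<bar>Wfun n \<sigma>\<bar> ^ (k + 2))"
    by (simp only: gibbs_expect_add gibbs_expect_cmult)
  finally show ?thesis .
qed

section \<open>Estimates for the pair \<open>(W, W')\<close>\<close>

text \<open>With \<open>c = n powr (1/4)\<close> and \<open>a = |m|\<close>, these turn error bounds in terms of \<open>m\<close> into bounds
  in terms of \<open>|W| = a * c\<close>.\<close>
lemma drift_error_rescale_le:
  fixes a c :: real
  assumes c: "1 \<le> c" and a: "0 \<le> a" "a \<le> 1"
  shows "(2/15 * a^5 + a / c^4 + a^3 / c^4 + 2 * (1 / c^4)^2) / c^3 \<le> (2/15 * (a * c)^5 + 2 * (a * c) + 2) / c^8"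
proof -
  have "a^2 \<le> 1"
    using a by (simp add: power_le_one)
  then have "a * a^2 \<le> a"
    using a mult_left_mono[of "a^2" 1 a] by simp
  then have "a^3 \<le> a"
    by (simp add: power3_eq_cube power2_eq_square mult.assoc)
  then have "a^3 / c^7 \<le> a / c^7"
    using c by (simp add: divide_right_mono)
  moreover have "2 / c^11 \<le> 2 / c^8"
    using c by (intro divide_left_mono power_increasing) auto
  moreover have "(2/15 * a^5 + a / c^4 + a^3 / c^4 + 2 * (1 / c^4)^2) / c^3
      = 2/15 * a^5 / c^3 + a / c^7 + a^3 / c^7 + 2 / c^11"
    "(2/15 * (a * c)^5 + 2 * (a * c) + 2) / c^8 = 2/15 * a^5 / c^3 + 2 * a / c^7 + 2 / c^8"
    using c by (simp_all add: field_simps eval_nat_numeral)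
  ultimately show ?thesis
    by simp
qed

lemma flip_error_rescale_le:
  fixes a c :: real
  assumes "1 \<le> c"
  shows "2 * (a^2 + 1 / c^4) / c^6 \<le> (2 * (a * c)^2 + 2) / c^8"
proof -
  have "2 / c^10 \<le> 2 / c^8"
    using assms by (intro divide_left_mono power_increasing) auto
  moreover have "2 * (a^2 + 1 / c^4) / c^6 = 2 * a^2 / c^6 + 2 / c^10"
    "(2 * (a * c)^2 + 2) / c^8 = 2 * a^2 / c^6 + 2 / c^8"
    using assms by (simp_all add: field_simps eval_nat_numeral)
  ultimately show ?thesis
    by simp
qed

lemma abs_step_expect_W_diff_error_le:
  assumes "\<sigma> \<in> spins n" "1 \<le> n"
  shows "\<bar>step_expect n (\<lambda>\<eta>. W n \<eta> - W' n \<eta>) \<sigma> - real n powr (-3/2) / 3 * Wfun n \<sigma> ^ 3\<bar>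
    \<le> (2/15 * \<bar>Wfun n \<sigma>\<bar> ^ 5 + 2 * \<bar>Wfun n \<sigma>\<bar> + 2) / real n ^ 2"
proof -
  define q m where "q = real n powr (1/4)" and "m = magnetization n \<sigma>"
  have q: "1 \<le> q" "q ^ 4 = real n" "real n powr (3/4) = q ^ 3" "real n powr (-3/2) = 1 / q ^ 6"
    using real_powr_quarter(1-4)[OF assms(2)] by (simp_all add: q_def)
  have W: "Wfun n \<sigma> = q * m"
    unfolding q_def m_def by (rule Wfun_eq_magnetization[OF assms(2)])
  have m: "\<bar>m\<bar> \<le> 1"
    unfolding m_def by (rule abs_magnetization_le[OF assms(1)])
  have "step_expect n (\<lambda>\<eta>. W n \<eta> - W' n \<eta>) \<sigma> - real n powr (-3/2) / 3 * Wfun n \<sigma> ^ 3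
      = (glauber_drift n \<sigma> - m^3/3) / q^3"
    unfolding step_expect_W_diff[OF assms] q(3,4) W using q(1) by (simp add: field_simps eval_nat_numeral)
  moreover have "\<bar>glauber_drift n \<sigma> - m^3/3\<bar> \<le> 2/15 * \<bar>m\<bar>^5 + \<bar>m\<bar> / q^4 + \<bar>m\<bar>^3 / q^4 + 2 * (1 / q^4)^2"
    using flip_rates_drift_cubic_error[OF m, of "1 / real n"] assms(2)
    by (simp add: glauber_drift_def m_def q(2))
  ultimately have "\<bar>step_expect n (\<lambda>\<eta>. W n \<eta> - W' n \<eta>) \<sigma> - real n powr (-3/2) / 3 * Wfun n \<sigma> ^ 3\<bar>
      \<le> (2/15 * \<bar>m\<bar>^5 + \<bar>m\<bar> / q^4 + \<bar>m\<bar>^3 / q^4 + 2 * (1 / q^4)^2) / q^3"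
    using q(1) by (simp add: abs_divide divide_right_mono)
  also have "\<dots> \<le> (2/15 * (\<bar>m\<bar> * q)^5 + 2 * (\<bar>m\<bar> * q) + 2) / q^8"
    using m q(1) by (intro drift_error_rescale_le) auto
  also have "\<dots> = (2/15 * \<bar>Wfun n \<sigma>\<bar> ^ 5 + 2 * \<bar>Wfun n \<sigma>\<bar> + 2) / real n ^ 2"
    using q(1) by (simp add: W abs_mult q(2)[symmetric] power_mult[symmetric] mult.commute)
  finally show ?thesis .
qed

lemma abs_step_expect_W_diff_sq_error_le:
  assumes "\<sigma> \<in> spins n" "1 \<le> n"
  shows "\<bar>step_expect n (\<lambda>\<eta>. (W n \<eta> - W' n \<eta>)^2) \<sigma> - 2 * real n powr (-3/2)\<bar>
    \<le> (2 * Wfun n \<sigma> ^ 2 + 2) / real n ^ 2"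
proof -
  define q m where "q = real n powr (1/4)" and "m = magnetization n \<sigma>"
  have q: "1 \<le> q" "q ^ 4 = real n" "real n powr (3/4) = q ^ 3" "real n powr (-3/2) = 1 / q ^ 6"
    using real_powr_quarter(1-4)[OF assms(2)] by (simp_all add: q_def)
  have W: "Wfun n \<sigma> = q * m"
    unfolding q_def m_def by (rule Wfun_eq_magnetization[OF assms(2)])
  have "step_expect n (\<lambda>\<eta>. (W n \<eta> - W' n \<eta>)^2) \<sigma> - 2 * real n powr (-3/2)
      = - 2 * (1 - 2 * glauber_flip_prob n \<sigma>) / q^6"
    unfolding step_expect_W_diff_sq[OF assms] q(3,4) using q(1) by (simp add: field_simps eval_nat_numeral)
  moreover have "\<bar>1 - 2 * glauber_flip_prob n \<sigma>\<bar> \<le> m^2 + 1 / q^4"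
    using flip_rates_sum_approx[OF abs_magnetization_le[OF assms(1)], of "1 / real n"]
    by (simp add: glauber_flip_prob_def m_def q(2))
  ultimately have "\<bar>step_expect n (\<lambda>\<eta>. (W n \<eta> - W' n \<eta>)^2) \<sigma> - 2 * real n powr (-3/2)\<bar>
      \<le> 2 * (m^2 + 1 / q^4) / q^6"
    using q(1) by (simp add: abs_divide abs_mult divide_right_mono)
  also have "\<dots> \<le> (2 * (m * q)^2 + 2) / q^8"
    using q(1) by (rule flip_error_rescale_le)
  also have "\<dots> = (2 * Wfun n \<sigma> ^ 2 + 2) / real n ^ 2"
    by (simp add: W q(2)[symmetric] power_mult[symmetric] mult.commute)
  finally show ?thesis .
qed

lemma Ex_abs_drift_error_le:
  assumes "1 \<le> n"
  shows "Ex n (\<lambda>\<omega>. \<bar>condE_W n (\<lambda>\<eta>. W n \<eta> - W' n \<eta>) \<omega> - real n powr (-3/2) / 3 * (W n \<omega>) ^ 3\<bar>)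
    \<le> 15 * real n powr (-2)"
proof -
  let ?W = "Wfun n"
  have "Ex n (\<lambda>\<omega>. \<bar>condE_W n (\<lambda>\<eta>. W n \<eta> - W' n \<eta>) \<omega> - real n powr (-3/2) / 3 * (W n \<omega>) ^ 3\<bar>)
      \<le> gibbs_expect n (\<lambda>\<sigma>. \<bar>step_expect n (\<lambda>\<eta>. W n \<eta> - W' n \<eta>) \<sigma> - real n powr (-3/2) / 3 * ?W \<sigma> ^ 3\<bar>)"
    by (rule Ex_abs_condE_W_diff_le[OF assms])
  also have "\<dots> \<le> gibbs_expect n (\<lambda>\<sigma>. (2/15 * \<bar>?W \<sigma>\<bar> ^ 5 + 2 * \<bar>?W \<sigma>\<bar> + 2) / real n ^ 2)"
    by (rule gibbs_expect_mono) (rule abs_step_expect_W_diff_error_le[OF _ assms])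
  also have "\<dots> = (2/15 * gibbs_expect n (\<lambda>\<sigma>. \<bar>?W \<sigma>\<bar> ^ 5) + 2 * gibbs_expect n (\<lambda>\<sigma>. \<bar>?W \<sigma>\<bar>) + 2)
      / real n ^ 2"
    by (simp only: divide_inverse mult.commute[of _ "inverse _"] gibbs_expect_add gibbs_expect_cmult gibbs_expect_const)
  also have "\<dots> \<le> (2/15 * (182/3) + 2 * (23/12) + 2) / real n ^ 2"
  proof -
    have "gibbs_expect n (\<lambda>\<sigma>. \<bar>?W \<sigma>\<bar> ^ 5) \<le> 182/3"
      using gibbs_expect_abs_W_power_Suc_le[of n 4] gibbs_expect_W4_le[OF assms] gibbs_expect_W6_le[OF assms]
      by simp
    moreover have "gibbs_expect n (\<lambda>\<sigma>. \<bar>?W \<sigma>\<bar>) \<le> 1/2 * 1 + 1/2 * gibbs_expect n (\<lambda>\<sigma>. ?W \<sigma> ^ 2)"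
      using gibbs_expect_abs_W_power_Suc_le[of n 0]
      by (simp only: One_nat_def[symmetric] power_one_right power_0 gibbs_expect_const add_0 power2_abs)
    with gibbs_expect_W2_le[OF assms] have "gibbs_expect n (\<lambda>\<sigma>. \<bar>?W \<sigma>\<bar>) \<le> 23/12"
      by linarith
    ultimately show ?thesis
      by (intro divide_right_mono) auto
  qed
  also have "\<dots> \<le> 15 / real n ^ 2"
    by (rule divide_right_mono) simp_all
  finally show ?thesis
    by (simp add: real_powr_quarter(5)[OF assms])
qed

lemma Ex_abs_flip_error_le:
  assumes "1 \<le> n"
  shows "Ex n (\<lambda>\<omega>. \<bar>condE_W n (\<lambda>\<eta>. (W n \<eta> - W' n \<eta>)^2) \<omega> - 2 * real n powr (-3/2)\<bar>)
    \<le> 15 * real n powr (-2)"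
proof -
  have "Ex n (\<lambda>\<omega>. \<bar>condE_W n (\<lambda>\<eta>. (W n \<eta> - W' n \<eta>)^2) \<omega> - 2 * real n powr (-3/2)\<bar>)
      \<le> gibbs_expect n (\<lambda>\<sigma>. \<bar>step_expect n (\<lambda>\<eta>. (W n \<eta> - W' n \<eta>)^2) \<sigma> - 2 * real n powr (-3/2)\<bar>)"
    using Ex_abs_condE_W_diff_le[OF assms, of _ "\<lambda>_. 2 * real n powr (-3/2)"] .
  also have "\<dots> \<le> gibbs_expect n (\<lambda>\<sigma>. (2 * Wfun n \<sigma> ^ 2 + 2) / real n ^ 2)"
    by (rule gibbs_expect_mono) (rule abs_step_expect_W_diff_sq_error_le[OF _ assms])
  also have "\<dots> = (2 * gibbs_expect n (\<lambda>\<sigma>. Wfun n \<sigma> ^ 2) + 2) / real n ^ 2"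
    by (simp only: divide_inverse mult.commute[of _ "inverse _"] gibbs_expect_add gibbs_expect_cmult gibbs_expect_const)
  also have "\<dots> \<le> (2 * (17/6) + 2) / real n ^ 2"
    using gibbs_expect_W2_le[OF assms] by (intro divide_right_mono) auto
  also have "\<dots> \<le> 15 / real n ^ 2"
    by (rule divide_right_mono) simp_all
  finally show ?thesis
    by (simp add: real_powr_quarter(5)[OF assms])
qed

lemma Ex_abs_W_cube_le:
  assumes "1 \<le> n"
  shows "Ex n (\<lambda>\<omega>. \<bar>W n \<omega>\<bar> ^ 3) \<le> 15"
proof -
  have "Ex n (\<lambda>\<omega>. \<bar>W n \<omega>\<bar> ^ 3) = gibbs_expect n (\<lambda>\<sigma>. \<bar>Wfun n \<sigma>\<bar> ^ 3)"
    unfolding W_def by (rule Ex_fst[OF assms])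
  also have "\<dots> \<le> 1/2 * gibbs_expect n (\<lambda>\<sigma>. Wfun n \<sigma> ^ 2) + 1/2 * gibbs_expect n (\<lambda>\<sigma>. Wfun n \<sigma> ^ 4)"
    using gibbs_expect_abs_W_power_Suc_le[of n 2] by simp
  also have "\<dots> \<le> 15"
    using gibbs_expect_W2_le[OF assms] gibbs_expect_W4_le[OF assms] by simp
  finally show ?thesis .
qed

lemma abs_W_diff_le:
  assumes "\<omega> \<in> omega n"
  shows "\<bar>W n \<omega> - W' n \<omega>\<bar> \<le> 2 * real n powr (-3/4)"
proof -
  obtain \<sigma> i s where \<omega>: "\<omega> = (\<sigma>, i, s)" "\<sigma> \<in> spins n" "i < n" "s \<in> {-1, 1}"
    using assms unfolding omega_def by auto
  then have "\<bar>\<sigma> i - s\<bar> \<le> 2"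
    using spin_values[OF \<omega>(2,3)] by auto
  then show ?thesis
    using \<omega>(3) by (simp add: \<omega>(1) W_diff_eq abs_divide powr_minus_divide divide_right_mono)
qed

theorem lemma5p1:
  fixes n :: nat
  assumes "n \<ge> 1"
  shows "Ex n (\<lambda>\<omega>. \<bar>condE_W n (\<lambda>\<eta>. W n \<eta> - W' n \<eta>) \<omega>
              - real n powr (-3/2) / 3 * (W n \<omega>) ^ 3\<bar>) \<le> 15 * real n powr (-2) \<and>
         Ex n (\<lambda>\<omega>. \<bar>condE_W n (\<lambda>\<eta>. (W n \<eta> - W' n \<eta>)^2) \<omega>
              - 2 * real n powr (-3/2)\<bar>) \<le> 15 * real n powr (-2) \<and>
         Ex n (\<lambda>\<omega>. \<bar>W n \<omega>\<bar> ^ 3) \<le> 15 \<and>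
         (\<forall>\<omega>\<in>omega n. \<bar>W n \<omega> - W' n \<omega>\<bar> \<le> 2 * real n powr (-3/4))"
  using Ex_abs_drift_error_le[OF assms] Ex_abs_flip_error_le[OF assms] Ex_abs_W_cube_le[OF assms]
    abs_W_diff_le by blast

end
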